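(* For the OG-PPP and the PLP-PPP with line intensity $\mu$ and vehicle intensity $\lambda$, the nearest-neighbor distance distribution of the typical vehicle of order $m\in\{2,4\}$ is $$F_R(r)=1-\exp\Bigl(-m\lambda r-2\mu\int_0^r\bigl(1-e^{-2\lambda\sqrt{r^2-u^2}}\bigr)\,\mathrm{d}u\Bigr),\qquad r\ge 0.$$
   Context: A line is $L(x,\varphi)=\{(a,b): a\cos\varphi+b\sin\varphi=x\}$. Line-based Poisson street system: $\{x_i\}$ a homogeneous PPP of intensity $\mu$ on $\mathbb{R}$ with i.i.d. orientations $\varphi_i\sim\nu$ on $[0,\pi)$, $\mathcal{S}=\bigcup_i L(x_i,\varphi_i)$; OG: $\nu=\tfrac12\delta_0+\tfrac12\delta_{\pi/2}$; PLP: $\nu$ uniform on $[0,\pi)$. OG-PPP / PLP-PPP: conditionally on the lines, vehicles form independent homogeneous 1D PPPs of intensity $\lambda$ on each line. Typical vehicle of order $m$: a vehicle at the origin $o$ lying on $m/2$ lines through $o$ ($m=2$: one line, a general vehicle; $m=4$: two distinct lines, an intersection vehicle); the configuration consists of these $m/2$ lines through $o$, each with an independent PPP of intensity $\lambda$, plus an independent copy of the stationary line process with its vehicles. The vehicle at $o$ is not counted. $F_R(r)$ is the probability that some other vehicle lies within distance $r$ of $o$. *)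

theory Defs
  imports "HOL-Probability.Probability"
begin

datatype street_model = OG | PLP

definition orient_law :: "street_model \<Rightarrow> real measure" where
  "orient_law s = (case s of
      OG \<Rightarrow> distr (measure_pmf (pmf_of_set {0, pi/2})) borel (\<lambda>x. x)
    | PLP \<Rightarrow> uniform_measure lborel {0..<pi})"

text \<open>Points of a homogeneous 1D Poisson process represented through its spacings:
  given gaps g (i.i.d. Exp(intensity)), the points are
  g 0, g 0 + g 1, ... on the positive half-line and -g(-1), -g(-1)-g(-2), ... on the
  negative half-line (point i for i in int).\<close>
definition ppp_point :: "(int \<Rightarrow> real) \<Rightarrow> int \<Rightarrow> real" where
  "ppp_point g i = (if 0 \<le> i then (\<Sum>j\<in>{0..i}. g j) else - (\<Sum>j\<in>{i..-1}. g j))"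

text \<open>Point at signed position t along the line L(x,phi) = {(a,b). a cos phi + b sin phi = x}.\<close>
definition line_point :: "real \<Rightarrow> real \<Rightarrow> real \<Rightarrow> real \<times> real" where
  "line_point x phi t = (x * cos phi - t * sin phi, x * sin phi + t * cos phi)"

text \<open>Index type of all the independent primitive random variables.\<close>
datatype rv_index =
    LineGap int            \<comment> \<open>spacings of the line PPP (intensity mu)\<close>
  | LineOrient int
  | VehGap int int         \<comment> \<open>spacings of the vehicle PPP on stationary line i\<close>
  | TypVehGap nat int      \<comment> \<open>spacings of the vehicle PPP on the j-th line through o\<close>

text \<open>All vehicles other than the typical one at o: the vehicles on the m/2 lines
  through o (orientations psi j) and the vehicles of the stationary street system.\<close>
definition other_vehicles ::
  "nat \<Rightarrow> (nat \<Rightarrow> real) \<Rightarrow> (int \<Rightarrow> real) \<Rightarrow> (int \<Rightarrow> real) \<Rightarrow> (int \<Rightarrow> int \<Rightarrow> real)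
     \<Rightarrow> (nat \<Rightarrow> int \<Rightarrow> real) \<Rightarrow> (real \<times> real) set" where
  "other_vehicles m psi G Phi V W =
     {line_point 0 (psi j) (ppp_point (W j) k) | j k. j < m div 2}
     \<union> {line_point (ppp_point G i) (Phi i) (ppp_point (V i) k) | i k. True}"

end

theory Submission
  imports Defs
begin

text \<open>The point at position t on the line L(x, \<phi>) has distance sqrt (x^2 + t^2) from o, whatever
  \<phi> is. Almost surely all gaps are positive, and then no vehicle of a
  line at distance x lies within distance r of o iff the two gaps adjacent to the foot of the
  perpendicular exceed the half chord sqrt (r^2 - x^2); given the line this has probability
  exp (-2 \<lambda> sqrt (r^2 - x^2)), and exp (-2 \<lambda> r) for each of the m/2 lines through o.
  Integrating out the gaps one at a time turns the probability that the first N stationary lines on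
  one side of o miss the disc into the N-th iterate at 0 of the renewal operator
  T w a = E [miss (a + Y) * w (a + Y)], Y \<sim> Exp \<mu>. The function
  a \<mapsto> exp (-\<mu> * (integral of 1 - miss over [a, r])) is a fixed point of T on [0, \<infinity>) below 1,
  and 1 is below it plus the indicator of (-\<infinity>, r], whose iterates decay like (1 - exp (-\<mu> r))^N.
  So the iterates converge to the fixed point at 0; the two sides and the lines through o are
  independent, and N \<rightarrow> \<infinity> gives the formula.\<close>

section \<open>Geometry of the event\<close>

lemma norm_line_point: "norm (line_point x \<phi> t) = sqrt (x\<^sup>2 + t\<^sup>2)"
proof -
  have "(x * cos \<phi> - t * sin \<phi>)\<^sup>2 + (x * sin \<phi> + t * cos \<phi>)\<^sup>2
      = (x\<^sup>2 + t\<^sup>2) * ((sin \<phi>)\<^sup>2 + (cos \<phi>)\<^sup>2)"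
    by algebra
  then show ?thesis by (simp add: line_point_def norm_Pair)
qed

lemma abs_le_sqrt_iff: "\<bar>t\<bar> \<le> sqrt a \<longleftrightarrow> t\<^sup>2 \<le> a"
  by (metis real_sqrt_abs real_sqrt_le_iff)

lemma norm_line_point_le_iff:
  assumes "0 \<le> r"
  shows "norm (line_point x \<phi> t) \<le> r \<longleftrightarrow> \<bar>t\<bar> \<le> sqrt (r\<^sup>2 - x\<^sup>2)"
  using assms
  by (simp add: norm_line_point abs_le_sqrt_iff real_sqrt_le_iff' real_le_lsqrt sqrt_le_D le_diff_eq
      add.commute)

lemma abs_ppp_point_ge:
  assumes "\<And>i. 0 \<le> g i"
  shows "min (g 0) (g (-1)) \<le> \<bar>ppp_point g k\<bar>"
proof (cases "0 \<le> k")
  case True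
  have "g 0 \<le> (\<Sum>j\<in>{0..k}. g j)"
    using True assms by (intro member_le_sum) auto
  then show ?thesis using True by (simp add: ppp_point_def)
next
  case False
  have "g (-1) \<le> (\<Sum>j\<in>{k..-1}. g j)"
    using False assms by (intro member_le_sum) auto
  then show ?thesis using False by (simp add: ppp_point_def)
qed

lemma ex_abs_ppp_point_le_iff:
  assumes "\<And>i. 0 \<le> g i"
  shows "(\<exists>k. \<bar>ppp_point g k\<bar> \<le> c) \<longleftrightarrow> min (g 0) (g (-1)) \<le> c"
proof
  assume "\<exists>k. \<bar>ppp_point g k\<bar> \<le> c"
  then obtain k where "\<bar>ppp_point g k\<bar> \<le> c" ..
  then show "min (g 0) (g (-1)) \<le> c"
    using abs_ppp_point_ge[of g k, OF assms] by linarith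
next
  have "\<bar>ppp_point g 0\<bar> = g 0" "\<bar>ppp_point g (-1)\<bar> = g (-1)"
    using assms[of 0] assms[of "-1"] by (simp_all add: ppp_point_def)
  moreover assume "min (g 0) (g (-1)) \<le> c"
  ultimately show "\<exists>k. \<bar>ppp_point g k\<bar> \<le> c"
    by (metis min_le_iff_disj)
qed

lemma ppp_point_nat: "ppp_point g (int n) = (\<Sum>i\<le>n. g (int i))"
proof (induction n)
  case (Suc n)
  have "{0..int (Suc n)} = insert (int (Suc n)) {0..int n}"
    by auto
  with Suc show ?case by (simp add: ppp_point_def ac_simps)
qed (simp add: ppp_point_def)

lemma ppp_point_neg: "ppp_point g (-1 - int n) = - (\<Sum>i\<le>n. g (-1 - int i))"
proof (induction n)
  case (Suc n)
  have "{-1 - int (Suc n)..-1} = insert (-1 - int (Suc n)) {-1 - int n..-1}"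
    by auto
  with Suc show ?case by (simp add: ppp_point_def ac_simps)
qed (simp add: ppp_point_def)

lemma all_int_iff_nat: "(\<forall>i::int. P i) \<longleftrightarrow> (\<forall>n. P (int n) \<and> P (-1 - int n))"
proof safe
  fix i :: int assume P: "\<forall>n. P (int n) \<and> P (-1 - int n)"
  show "P i"
  proof (cases "0 \<le> i")
    case True
    then have "i = int (nat i)" by simp
    then show ?thesis using P by metis
  next
    case False
    then have "i = -1 - int (nat (-1 - i))" by simp
    then show ?thesis using P by metis
  qed
qed auto

lemma measurable_ppp_point[measurable]:
  assumes [measurable]: "\<And>l. f l \<in> borel_measurable M"
  shows "(\<lambda>\<omega>. ppp_point (\<lambda>l. f l \<omega>) k) \<in> borel_measurable M"
  unfolding ppp_point_def by measurable

lemma other_vehicles_near_iff_ppp_point: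
  assumes "0 \<le> r"
  shows "(\<exists>v \<in> other_vehicles m \<psi> G \<Phi> V W. norm v \<le> r)
     \<longleftrightarrow> (\<exists>j < m div 2. \<exists>k. \<bar>ppp_point (W j) k\<bar> \<le> r)
         \<or> (\<exists>i k. \<bar>ppp_point (V i) k\<bar> \<le> sqrt (r\<^sup>2 - (ppp_point G i)\<^sup>2))"
proof -
  have "(\<exists>v \<in> other_vehicles m \<psi> G \<Phi> V W. norm v \<le> r)
     \<longleftrightarrow> (\<exists>j < m div 2. \<exists>k. norm (line_point 0 (\<psi> j) (ppp_point (W j) k)) \<le> r)
         \<or> (\<exists>i k. norm (line_point (ppp_point G i) (\<Phi> i) (ppp_point (V i) k)) \<le> r)"
    unfolding other_vehicles_def by blast
  then show ?thesis
    using assms by (simp add: norm_line_point_le_iff)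
qed

lemma other_vehicles_near_iff:
  assumes "0 \<le> r" and "\<And>i k. 0 \<le> V i k" and "\<And>j k. 0 \<le> W j k"
  shows "(\<exists>v \<in> other_vehicles m \<psi> G \<Phi> V W. norm v \<le> r)
     \<longleftrightarrow> (\<exists>j < m div 2. min (W j 0) (W j (-1)) \<le> r)
         \<or> (\<exists>i. min (V i 0) (V i (-1)) \<le> sqrt (r\<^sup>2 - (ppp_point G i)\<^sup>2))"
  using assms by (simp add: other_vehicles_near_iff_ppp_point ex_abs_ppp_point_le_iff)

section \<open>The renewal operator\<close>

definition renewal_op :: "real measure \<Rightarrow> (real \<Rightarrow> ennreal) \<Rightarrow> (real \<Rightarrow> ennreal) \<Rightarrow> real \<Rightarrow> ennreal" where
  "renewal_op D \<phi> w a = (\<integral>\<^sup>+y. \<phi> (a + y) * w (a + y) \<partial>D)"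

lemma measurable_renewal_op:
  assumes "prob_space D" "sets D = sets borel"
    and [measurable]: "\<phi> \<in> borel_measurable borel" "w \<in> borel_measurable borel"
  shows "renewal_op D \<phi> w \<in> borel_measurable borel"
proof -
  interpret D: prob_space D by fact
  have "(\<lambda>p. \<phi> (fst p + snd p) * w (fst p + snd p)) \<in> borel_measurable (borel \<Otimes>\<^sub>M D)"
    by (subst measurable_cong_sets[OF sets_pair_measure_cong[OF refl assms(2)] refl]) measurable
  from D.borel_measurable_nn_integral_fst[OF this] show ?thesis
    unfolding renewal_op_def[abs_def] by simp
qed

lemma measurable_funpow_renewal_op:
  assumes "prob_space D" "sets D = sets borel"
    and "\<phi> \<in> borel_measurable borel" "w \<in> borel_measurable borel"
  shows "(renewal_op D \<phi> ^^ n) w \<in> borel_measurable borel"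
  by (induction n) (simp_all add: assms measurable_renewal_op)

lemma renewal_op_mono:
  assumes "AE y in D. 0 \<le> y" and "\<And>b. a \<le> b \<Longrightarrow> w b \<le> w' b"
  shows "renewal_op D \<phi> w a \<le> renewal_op D \<phi> w' a"
  unfolding renewal_op_def
  using assms(1)
  by (intro nn_integral_mono_AE) (auto elim!: eventually_mono intro!: mult_left_mono assms(2))

lemma renewal_op_cong:
  assumes "AE y in D. 0 \<le> y" and "\<And>b. a \<le> b \<Longrightarrow> w b = w' b"
  shows "renewal_op D \<phi> w a = renewal_op D \<phi> w' a"
  using renewal_op_mono[OF assms(1), of a w w'] renewal_op_mono[OF assms(1), of a w' w] assms(2)
  by (metis order.antisym order.refl)

lemma renewal_op_add:
  assumes "sets D = sets borel"
    and [measurable]: "\<phi> \<in> borel_measurable borel"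
    and [measurable]: "u \<in> borel_measurable borel" "v \<in> borel_measurable borel"
  shows "renewal_op D \<phi> (\<lambda>b. u b + v b) a = renewal_op D \<phi> u a + renewal_op D \<phi> v a"
  unfolding renewal_op_def distrib_left measurable_cong_sets[OF assms(1) refl]
  by (rule nn_integral_add) (simp_all add: measurable_cong_sets[OF assms(1) refl])

lemma renewal_op_cmult:
  assumes "sets D = sets borel"
    and [measurable]: "\<phi> \<in> borel_measurable borel" "w \<in> borel_measurable borel"
  shows "renewal_op D \<phi> (\<lambda>b. c * w b) a = c * renewal_op D \<phi> w a"
  unfolding renewal_op_def
  by (subst nn_integral_cmult[symmetric])
     (simp_all add: measurable_cong_sets[OF assms(1) refl] ac_simps)

lemma funpow_renewal_op_mono:
  assumes "AE y in D. 0 \<le> y" and "\<And>b. w b \<le> w' b"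
  shows "(renewal_op D \<phi> ^^ n) w a \<le> (renewal_op D \<phi> ^^ n) w' a"
proof (induction n arbitrary: a)
  case (Suc n)
  then show ?case by (simp add: renewal_op_mono[OF assms(1)])
qed (simp add: assms(2))

lemma funpow_renewal_op_fixed:
  assumes "AE y in D. 0 \<le> y" and "\<And>b. 0 \<le> b \<Longrightarrow> renewal_op D \<phi> f b = f b" and "0 \<le> a"
  shows "(renewal_op D \<phi> ^^ n) f a = f a"
  using assms(3)
proof (induction n arbitrary: a)
  case (Suc n)
  then have "renewal_op D \<phi> ((renewal_op D \<phi> ^^ n) f) a = renewal_op D \<phi> f a"
    by (intro renewal_op_cong[OF assms(1)]) simp
  then show ?case using Suc.prems assms(2) by simp
qed simp

lemma funpow_renewal_op_add:
  assumes "prob_space D" "sets D = sets borel"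
    and "\<phi> \<in> borel_measurable borel" "u \<in> borel_measurable borel" "v \<in> borel_measurable borel"
  shows "(renewal_op D \<phi> ^^ n) (\<lambda>b. u b + v b) a
       = (renewal_op D \<phi> ^^ n) u a + (renewal_op D \<phi> ^^ n) v a"
proof (induction n arbitrary: a)
  case (Suc n)
  then have "(renewal_op D \<phi> ^^ n) (\<lambda>b. u b + v b)
      = (\<lambda>b. (renewal_op D \<phi> ^^ n) u b + (renewal_op D \<phi> ^^ n) v b)"
    by auto
  then show ?case
    using assms by (simp add: renewal_op_add measurable_funpow_renewal_op)
qed simp

section \<open>Independent families with exponential gaps\<close>

lemma (in prob_space) prob_exponential_gt:
  assumes D: "distributed M lborel Y (exponential_density l)" and l: "0 < l"
  shows "prob {\<omega> \<in> space M. c < Y \<omega>} = exp (- l * max 0 c)"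
proof (cases "0 \<le> c")
  case True
  then show ?thesis using exponential_distributedD_gt[OF D True l] by (simp add: mult.commute)
next
  case False
  have [measurable]: "Y \<in> borel_measurable M"
    using D by (auto simp: distributed_def)
  have "1 = prob {\<omega> \<in> space M. 0 < Y \<omega>}"
    using exponential_distributedD_gt[OF D order.refl l] by simp
  also have "\<dots> \<le> prob {\<omega> \<in> space M. c < Y \<omega>}"
    using False by (intro finite_measure_mono) auto
  finally show ?thesis using False by (simp add: antisym)
qed

lemma (in prob_space) AE_exponential_pos:
  assumes "distributed M lborel Y (exponential_density l)" and "0 < l"
  shows "AE \<omega> in M. 0 < Y \<omega>"
proof -
  have "prob {\<omega> \<in> space M. 0 < Y \<omega>} = 1"
    using prob_exponential_gt[OF assms, of 0] by simp
  then show ?thesis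
    by (rule AE_prob_1[THEN eventually_mono]) simp
qed

abbreviation product_borel :: "('i \<Rightarrow> real) measure" where
  "product_borel \<equiv> PiM UNIV (\<lambda>_. borel)"

definition ignores :: "'i set \<Rightarrow> (('i \<Rightarrow> real) \<Rightarrow> 'b) \<Rightarrow> bool" where
  "ignores K F \<longleftrightarrow> (\<forall>x k y. k \<in> K \<longrightarrow> F (x(k := y)) = F x)"

lemma ignoresD: "ignores K F \<Longrightarrow> k \<in> K \<Longrightarrow> F (x(k := y)) = F x"
  by (simp add: ignores_def)

lemma measurable_fun_upd_pair:
  "(\<lambda>p. (fst p)(k := snd p))
     \<in> PiM (UNIV - {k}) (\<lambda>_. borel) \<Otimes>\<^sub>M borel \<rightarrow>\<^sub>M (product_borel :: ('i \<Rightarrow> real) measure)"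
proof (rule measurable_PiM_single')
  fix i :: 'i
  show "(\<lambda>p. ((fst p)(k := snd p)) i) \<in> borel_measurable (PiM (UNIV - {k}) (\<lambda>_. borel) \<Otimes>\<^sub>M borel)"
    by (cases "i = k") simp_all
qed simp

lemma ignores_thresholds_prefix:
  fixes a b :: "nat \<Rightarrow> 'i"
  assumes "inj a" "inj b" "\<And>i j. a i \<noteq> b j"
    and "\<And>j. ignores (range a \<union> range b) (c j)" "ignores (range a \<union> range b) Z"
  shows "ignores {a n, b n} (\<lambda>x. Z x * of_bool (\<forall>j<n. c j x < min (x (a j)) (x (b j))))"
  unfolding ignores_def
proof (intro allI impI)
  fix x k y assume k: "k \<in> {a n, b n}"
  then have "k \<in> range a \<union> range b" by auto
  then have "Z (x(k := y)) = Z x" "\<And>j. c j (x(k := y)) = c j x"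
    using ignoresD[OF assms(5)] ignoresD[OF assms(4)] by blast+
  moreover have "a j \<noteq> k" "b j \<noteq> k" if "j < n" for j
    using that k assms(1,2) assms(3)[of j n] assms(3)[of n j] by (auto simp: inj_eq)
  ultimately show
    "Z (x(k := y)) * of_bool (\<forall>j<n. c j (x(k := y)) < min ((x(k := y)) (a j)) ((x(k := y)) (b j)))
       = Z x * of_bool (\<forall>j<n. c j x < min (x (a j)) (x (b j)))"
    by simp
qed

locale indep_family = prob_space M for M :: "'a measure" +
  fixes X :: "'i \<Rightarrow> 'a \<Rightarrow> real"
  assumes indep: "indep_vars (\<lambda>_. borel) X UNIV"
begin

definition sample :: "'a \<Rightarrow> 'i \<Rightarrow> real" where
  "sample \<omega> = (\<lambda>k. X k \<omega>)"

lemma sample_apply: "sample \<omega> k = X k \<omega>"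
  by (simp add: sample_def)

lemma measurable_X[measurable]: "X k \<in> borel_measurable M"
  using indep by (auto simp: indep_vars_def)

lemma measurable_sample[measurable]: "sample \<in> M \<rightarrow>\<^sub>M product_borel"
  unfolding sample_def by (rule measurable_PiM_single') auto

lemma prob_space_distr_X: "prob_space (distr M borel (X k))"
  by (rule prob_space_distr) simp

lemma indep_var_restrict_coord:
  "indep_var (PiM (UNIV - {k}) (\<lambda>_. borel)) (\<lambda>\<omega>. restrict (sample \<omega>) (UNIV - {k}))
             (PiM {k} (\<lambda>_. borel)) (\<lambda>\<omega>. restrict (sample \<omega>) {k})"
proof -
  define B where "B = (\<lambda>b::bool. if b then UNIV - {k} else {k})"
  have "indep_vars (\<lambda>b. PiM (B b) (\<lambda>_. borel)) (\<lambda>b \<omega>. restrict (sample \<omega>) (B b)) UNIV"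
    unfolding sample_def
    by (rule indep_vars_restrict[OF indep]) (auto simp: B_def disjoint_family_on_def)
  then show ?thesis
    unfolding indep_var_def
    by (rule indep_vars_cong[THEN iffD1, rotated -1]) (auto simp: B_def split: bool.split)
qed

lemma nn_integral_sample_integrate_coord:
  assumes F[measurable]: "F \<in> borel_measurable product_borel"
  shows "(\<integral>\<^sup>+\<omega>. F (sample \<omega>) \<partial>M)
       = (\<integral>\<^sup>+\<omega>. (\<integral>\<^sup>+y. F ((sample \<omega>)(k := y)) \<partial>distr M borel (X k)) \<partial>M)"
proof -
  let ?P1 = "PiM (UNIV - {k}) (\<lambda>_. borel) :: ('i \<Rightarrow> real) measure"
  let ?P2 = "PiM {k} (\<lambda>_. borel) :: ('i \<Rightarrow> real) measure"
  let ?R1 = "\<lambda>\<omega>. restrict (sample \<omega>) (UNIV - {k})"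
  let ?R2 = "\<lambda>\<omega>. restrict (sample \<omega>) {k}"
  let ?Dk = "distr M borel (X k)"
  have split: "distr M ?P1 ?R1 \<Otimes>\<^sub>M distr M ?P2 ?R2 = distr M (?P1 \<Otimes>\<^sub>M ?P2) (\<lambda>\<omega>. (?R1 \<omega>, ?R2 \<omega>))"
    using indep_var_restrict_coord by (simp add: indep_var_distribution_eq)
  define upd where "upd = (\<lambda>p. (fst p)(k := snd p) :: 'i \<Rightarrow> real)"
  have [measurable]: "upd \<in> ?P1 \<Otimes>\<^sub>M borel \<rightarrow>\<^sub>M product_borel"
    unfolding upd_def by (rule measurable_fun_upd_pair)
  have [measurable]: "(\<lambda>p. F (upd p)) \<in> borel_measurable (?P1 \<Otimes>\<^sub>M ?Dk)"
    by (subst measurable_cong_sets[OF sets_pair_measure_cong[OF refl sets_distr] refl]) measurable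
  interpret P2: prob_space "distr M ?P2 ?R2" by (rule prob_space_distr) simp
  interpret Dk: prob_space ?Dk by (rule prob_space_distr_X)
  have inner: "(\<integral>\<^sup>+z. F (upd (x, z k)) \<partial>distr M ?P2 ?R2) = (\<integral>\<^sup>+y. F (upd (x, y)) \<partial>?Dk)"
    if "x \<in> space ?P1" for x
    using that by (simp add: nn_integral_distr sample_apply)
  have "(\<integral>\<^sup>+\<omega>. F (sample \<omega>) \<partial>M) = (\<integral>\<^sup>+\<omega>. F (upd (?R1 \<omega>, ?R2 \<omega> k)) \<partial>M)"
    by (intro nn_integral_cong arg_cong[where f=F]) (auto simp: upd_def)
  also have "\<dots> = (\<integral>\<^sup>+p. F (upd (fst p, snd p k)) \<partial>(distr M ?P1 ?R1 \<Otimes>\<^sub>M distr M ?P2 ?R2))"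
    unfolding split by (subst nn_integral_distr) auto
  also have "\<dots> = (\<integral>\<^sup>+x. \<integral>\<^sup>+z. F (upd (x, z k)) \<partial>distr M ?P2 ?R2 \<partial>distr M ?P1 ?R1)"
    using P2.nn_integral_fst[of "\<lambda>p. F (upd (fst p, snd p k))"] by simp
  also have "\<dots> = (\<integral>\<^sup>+x. \<integral>\<^sup>+y. F (upd (x, y)) \<partial>?Dk \<partial>distr M ?P1 ?R1)"
    by (intro nn_integral_cong inner) simp
  also have "\<dots> = (\<integral>\<^sup>+\<omega>. \<integral>\<^sup>+y. F (upd (?R1 \<omega>, y)) \<partial>?Dk \<partial>M)"
    using Dk.borel_measurable_nn_integral_fst[of "\<lambda>p. F (upd p)"] by (subst nn_integral_distr) auto
  also have "\<dots> = (\<integral>\<^sup>+\<omega>. (\<integral>\<^sup>+y. F ((sample \<omega>)(k := y)) \<partial>?Dk) \<partial>M)"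
    by (intro nn_integral_cong arg_cong[where f=F]) (auto simp: upd_def)
  finally show ?thesis .
qed

lemma emeasure_distr_exponential_gt:
  assumes "distributed M lborel (X k) (exponential_density l)" "0 < l"
  shows "emeasure (distr M borel (X k)) {c<..} = ennreal (exp (- l * max 0 c))"
proof -
  have "emeasure (distr M borel (X k)) {c<..} = emeasure M {\<omega> \<in> space M. c < X k \<omega>}"
    by (subst emeasure_distr) (auto intro!: arg_cong[where f="emeasure M"])
  then show ?thesis
    using prob_exponential_gt[OF assms] by (simp add: emeasure_eq_measure)
qed

lemma nn_integral_exponential_threshold:
  assumes "distributed M lborel (X k) (exponential_density l)" "0 < l"
    and [measurable]: "Z \<in> borel_measurable product_borel" "c \<in> borel_measurable product_borel"
    and "ignores {k} Z" "ignores {k} c"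
  shows "(\<integral>\<^sup>+\<omega>. Z (sample \<omega>) * of_bool (c (sample \<omega>) < sample \<omega> k) \<partial>M)
       = (\<integral>\<^sup>+\<omega>. Z (sample \<omega>) * ennreal (exp (- l * max 0 (c (sample \<omega>)))) \<partial>M)"
proof -
  have inner: "(\<integral>\<^sup>+y. Z (x(k := y)) * of_bool (c (x(k := y)) < y) \<partial>distr M borel (X k))
      = Z x * ennreal (exp (- l * max 0 (c x)))" for x
  proof -
    have "(\<integral>\<^sup>+y. Z (x(k := y)) * of_bool (c (x(k := y)) < y) \<partial>distr M borel (X k))
        = (\<integral>\<^sup>+y. Z x * indicator {c x<..} y \<partial>distr M borel (X k))"
      using assms(5,6) by (intro nn_integral_cong) (simp add: ignoresD)
    also have "\<dots> = Z x * emeasure (distr M borel (X k)) {c x<..}"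
      by (rule nn_integral_cmult_indicator) simp
    finally show ?thesis by (simp add: emeasure_distr_exponential_gt[OF assms(1,2)])
  qed
  show ?thesis
    using nn_integral_sample_integrate_coord[of "\<lambda>x. Z x * of_bool (c x < x k)" k]
    by (simp add: inner)
qed

lemma nn_integral_exponential_threshold_pair:
  assumes "a \<noteq> b" and "distributed M lborel (X a) (exponential_density l)"
    and "distributed M lborel (X b) (exponential_density l)" and "0 < l"
    and [measurable]: "Z \<in> borel_measurable product_borel" "c \<in> borel_measurable product_borel"
    and "ignores {a, b} Z" "ignores {a, b} c"
  shows "(\<integral>\<^sup>+\<omega>. Z (sample \<omega>) * of_bool (c (sample \<omega>) < min (sample \<omega> a) (sample \<omega> b)) \<partial>M)
       = (\<integral>\<^sup>+\<omega>. Z (sample \<omega>) * ennreal (exp (- 2 * l * max 0 (c (sample \<omega>)))) \<partial>M)"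
proof -
  let ?e = "\<lambda>x. ennreal (exp (- l * max 0 (c x)))"
  have ign: "ignores {a} Z" "ignores {a} c" "ignores {b} c"
    using assms(7,8) by (simp_all add: ignores_def)
  have "ignores {b} (\<lambda>x. Z x * of_bool (c x < x a))"
    using assms(1,7,8) by (simp add: ignores_def)
  then have "(\<integral>\<^sup>+\<omega>. Z (sample \<omega>) * of_bool (c (sample \<omega>) < min (sample \<omega> a) (sample \<omega> b)) \<partial>M)
      = (\<integral>\<^sup>+\<omega>. (Z (sample \<omega>) * of_bool (c (sample \<omega>) < sample \<omega> a)) * ?e (sample \<omega>) \<partial>M)"
    using nn_integral_exponential_threshold[OF assms(3,4), of "\<lambda>x. Z x * of_bool (c x < x a)" c] ign
    by (simp add: of_bool_conj mult.assoc)
  also have "\<dots> = (\<integral>\<^sup>+\<omega>. (Z (sample \<omega>) * ?e (sample \<omega>)) * of_bool (c (sample \<omega>) < sample \<omega> a) \<partial>M)"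
    by (simp add: ac_simps)
  also have "\<dots> = (\<integral>\<^sup>+\<omega>. Z (sample \<omega>) * (?e (sample \<omega>) * ?e (sample \<omega>)) \<partial>M)"
    using ign
    by (subst nn_integral_exponential_threshold[OF assms(2,4)])
       (simp_all add: ignores_def mult.assoc)
  also have "\<dots> = (\<integral>\<^sup>+\<omega>. Z (sample \<omega>) * ennreal (exp (- 2 * l * max 0 (c (sample \<omega>)))) \<partial>M)"
    by (simp add: ennreal_mult'[symmetric] exp_add[symmetric] mult.assoc)
  finally show ?thesis .
qed

lemma nn_integral_exponential_thresholds:
  fixes a b :: "nat \<Rightarrow> 'i" and c :: "nat \<Rightarrow> ('i \<Rightarrow> real) \<Rightarrow> real"
  assumes "inj a" "inj b" "\<And>i j. a i \<noteq> b j"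
    and "\<And>j. distributed M lborel (X (a j)) (exponential_density l)"
    and "\<And>j. distributed M lborel (X (b j)) (exponential_density l)" and "0 < l"
    and [measurable]: "\<And>j. c j \<in> borel_measurable product_borel"
    and "\<And>j. ignores (range a \<union> range b) (c j)"
    and [measurable]: "Z \<in> borel_measurable product_borel"
    and "ignores (range a \<union> range b) Z"
  shows "(\<integral>\<^sup>+\<omega>. Z (sample \<omega>)
            * of_bool (\<forall>j<n. c j (sample \<omega>) < min (sample \<omega> (a j)) (sample \<omega> (b j))) \<partial>M)
       = (\<integral>\<^sup>+\<omega>. Z (sample \<omega>) * (\<Prod>j<n. ennreal (exp (- 2 * l * max 0 (c j (sample \<omega>))))) \<partial>M)"
  using assms(9,10)
proof (induction n arbitrary: Z)
  case 0
  then show ?case by simp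
next
  case (Suc n)
  note [measurable] = Suc.prems(1)
  define P where "P x \<longleftrightarrow> (\<forall>j<n. c j x < min (x (a j)) (x (b j)))" for x
  define E where "E x = ennreal (exp (- 2 * l * max 0 (c n x)))" for x
  have [measurable]: "Measurable.pred product_borel P"
    unfolding P_def by measurable
  have meas_E: "(\<lambda>x. E x * Z x) \<in> borel_measurable product_borel"
    unfolding E_def by measurable
  have ign_E: "ignores (range a \<union> range b) (\<lambda>x. E x * Z x)"
    using assms(8) Suc.prems(2) by (simp add: E_def ignores_def)
  have ign_P: "ignores {a n, b n} (\<lambda>x. Z x * of_bool (P x))"
    unfolding P_def by (rule ignores_thresholds_prefix[OF assms(1-3,8) Suc.prems(2)])
  have ign_c: "ignores {a n, b n} (c n)"
    using assms(8) by (simp add: ignores_def)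
  have "(\<integral>\<^sup>+\<omega>. Z (sample \<omega>)
           * of_bool (\<forall>j<Suc n. c j (sample \<omega>) < min (sample \<omega> (a j)) (sample \<omega> (b j))) \<partial>M)
      = (\<integral>\<^sup>+\<omega>. (Z (sample \<omega>) * of_bool (P (sample \<omega>)))
                 * of_bool (c n (sample \<omega>) < min (sample \<omega> (a n)) (sample \<omega> (b n))) \<partial>M)"
    by (simp add: P_def less_Suc_eq all_conj_distrib of_bool_conj mult.assoc)
  also have "\<dots> = (\<integral>\<^sup>+\<omega>. (Z (sample \<omega>) * of_bool (P (sample \<omega>))) * E (sample \<omega>) \<partial>M)"
    using nn_integral_exponential_threshold_pair[OF assms(3,4,5,6) _ _ ign_P ign_c]
    by (simp add: E_def)
  also have "\<dots> = (\<integral>\<^sup>+\<omega>. (E (sample \<omega>) * Z (sample \<omega>)) * of_bool (P (sample \<omega>)) \<partial>M)"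
    by (simp add: ac_simps)
  also have "\<dots> = (\<integral>\<^sup>+\<omega>. (E (sample \<omega>) * Z (sample \<omega>))
                 * (\<Prod>j<n. ennreal (exp (- 2 * l * max 0 (c j (sample \<omega>))))) \<partial>M)"
    using Suc.IH[OF meas_E ign_E] unfolding P_def by simp
  also have "\<dots> = (\<integral>\<^sup>+\<omega>. Z (sample \<omega>)
                 * (\<Prod>j<Suc n. ennreal (exp (- 2 * l * max 0 (c j (sample \<omega>))))) \<partial>M)"
    by (simp add: E_def ac_simps)
  finally show ?case .
qed

lemma nn_integral_renewal:
  fixes g :: "nat \<Rightarrow> 'i" and D :: "real measure"
  assumes "inj g" and D: "\<And>j. distr M borel (X (g j)) = D"
    and [measurable]: "\<phi> \<in> borel_measurable borel" "w \<in> borel_measurable borel"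
    and [measurable]: "Z \<in> borel_measurable product_borel" and "ignores (range g) Z"
  shows "(\<integral>\<^sup>+\<omega>. Z (sample \<omega>) * (\<Prod>j<n. \<phi> (\<Sum>i\<le>j. sample \<omega> (g i))) * w (\<Sum>i<n. sample \<omega> (g i)) \<partial>M)
       = (\<integral>\<^sup>+\<omega>. Z (sample \<omega>) \<partial>M) * (renewal_op D \<phi> ^^ n) w 0"
  using assms(4)
proof (induction n arbitrary: w)
  case 0
  have "(\<lambda>\<omega>. Z (sample \<omega>)) \<in> borel_measurable M"
    by measurable
  then show ?case by (simp add: nn_integral_multc)
next
  case (Suc n)
  note [measurable] = Suc.prems
  have D_prob: "prob_space D" and D_sets: "sets D = sets borel"
    using prob_space_distr_X[of "g 0"] D[of 0] by auto
  have [measurable]: "renewal_op D \<phi> w \<in> borel_measurable borel"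
    using measurable_renewal_op[OF D_prob D_sets] by simp
  define P where "P (x :: 'i \<Rightarrow> real) = (\<Prod>j<n. \<phi> (\<Sum>i\<le>j. x (g i)))" for x
  define S where "S (x :: 'i \<Rightarrow> real) = (\<Sum>i<n. x (g i))" for x
  have [measurable]: "P \<in> borel_measurable product_borel" "S \<in> borel_measurable product_borel"
    unfolding P_def S_def by measurable
  have fresh: "P (x(g n := y)) = P x" "S (x(g n := y)) = S x" "Z (x(g n := y)) = Z x" for x y
    using assms(1) ignoresD[OF assms(6)]
    by (auto simp: P_def S_def inj_eq intro!: prod.cong sum.cong)
  have inner: "(\<integral>\<^sup>+y. Z (x(g n := y)) * P (x(g n := y))
                      * (\<phi> (S (x(g n := y)) + y) * w (S (x(g n := y)) + y))
                   \<partial>distr M borel (X (g n)))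
      = Z x * P x * renewal_op D \<phi> w (S x)" for x
    unfolding fresh D renewal_op_def
    by (rule nn_integral_cmult) (subst measurable_cong_sets[OF D_sets refl], measurable)
  have "(\<integral>\<^sup>+\<omega>. Z (sample \<omega>) * (\<Prod>j<Suc n. \<phi> (\<Sum>i\<le>j. sample \<omega> (g i)))
           * w (\<Sum>i<Suc n. sample \<omega> (g i)) \<partial>M)
      = (\<integral>\<^sup>+\<omega>. Z (sample \<omega>) * P (sample \<omega>)
           * (\<phi> (S (sample \<omega>) + sample \<omega> (g n)) * w (S (sample \<omega>) + sample \<omega> (g n))) \<partial>M)"
    by (simp add: P_def S_def lessThan_Suc_atMost[symmetric] ac_simps)
  also have "\<dots> = (\<integral>\<^sup>+\<omega>. Z (sample \<omega>) * P (sample \<omega>) * renewal_op D \<phi> w (S (sample \<omega>)) \<partial>M)"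
    using nn_integral_sample_integrate_coord
            [of "\<lambda>x. Z x * P x * (\<phi> (S x + x (g n)) * w (S x + x (g n)))" "g n"]
    by (simp add: inner)
  also have "\<dots> = (\<integral>\<^sup>+\<omega>. Z (sample \<omega>) \<partial>M) * (renewal_op D \<phi> ^^ n) (renewal_op D \<phi> w) 0"
    unfolding P_def S_def by (rule Suc.IH) simp
  also have "\<dots> = (\<integral>\<^sup>+\<omega>. Z (sample \<omega>) \<partial>M) * (renewal_op D \<phi> ^^ Suc n) w 0"
    by (simp add: funpow_Suc_right del: funpow.simps)
  finally show ?case .
qed

end

section \<open>Iterates of the renewal operator for exponential gaps\<close>

text \<open>The probability that neither Exp lam gap adjacent to the foot of the perpendicular of a line
  at distance s from o falls below the half chord. For \<bar>s\<bar> > r the half chord sqrt (r^2 - s^2) is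
  negative (Isabelle's sqrt is odd), and the max turns it into 0.\<close>
definition miss_prob :: "real \<Rightarrow> real \<Rightarrow> real \<Rightarrow> real" where
  "miss_prob lam r s = exp (- 2 * lam * max 0 (sqrt (r\<^sup>2 - s\<^sup>2)))"

definition hit_integral :: "real \<Rightarrow> real \<Rightarrow> real \<Rightarrow> real" where
  "hit_integral lam r s = integral {s..r} (\<lambda>u. 1 - miss_prob lam r u)"

lemma continuous_on_miss_prob[continuous_intros]:
  "continuous_on A f \<Longrightarrow> continuous_on A (\<lambda>x. miss_prob lam r (f x))"
  unfolding miss_prob_def by (intro continuous_intros)

lemma measurable_miss_prob[measurable]: "miss_prob lam r \<in> borel_measurable borel"
  using continuous_on_miss_prob[OF continuous_on_id] by (intro borel_measurable_continuous_onI) simp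

lemma miss_prob_nonneg: "0 \<le> miss_prob lam r s"
  by (simp add: miss_prob_def)

lemma miss_prob_le_1: "0 \<le> lam \<Longrightarrow> miss_prob lam r s \<le> 1"
  by (simp add: miss_prob_def)

lemma miss_prob_eq_1: "0 \<le> r \<Longrightarrow> r \<le> s \<Longrightarrow> miss_prob lam r s = 1"
proof -
  assume "0 \<le> r" "r \<le> s"
  then have "r\<^sup>2 \<le> s\<^sup>2" by (simp add: power_mono)
  then show ?thesis by (simp add: miss_prob_def)
qed

lemma continuous_on_hit_integral: "continuous_on {a..r} (hit_integral lam r)"
  unfolding hit_integral_def
  by (intro indefinite_integral_continuous_1' integrable_continuous_interval continuous_intros)

lemma hit_integral_has_derivative:
  assumes "a < t" "t < r"
  shows "(hit_integral lam r has_real_derivative - (1 - miss_prob lam r t)) (at t)"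
proof -
  have "(hit_integral lam r has_real_derivative - (1 - miss_prob lam r t)) (at t within {a..r})"
    unfolding hit_integral_def
    by (rule integral_has_real_derivative') (use assms in \<open>auto intro!: continuous_intros\<close>)
  then show ?thesis using assms by (simp add: at_within_Icc_at)
qed

lemma hit_integral_nonneg: "0 \<le> lam \<Longrightarrow> 0 \<le> hit_integral lam r b"
  unfolding hit_integral_def
  by (intro integral_nonneg integrable_continuous_interval continuous_intros)
     (simp add: miss_prob_le_1)

lemma interval_integral_eq_hit_integral:
  assumes "0 \<le> r"
  shows "(LBINT u=0..r. 1 - exp (- 2 * lam * sqrt (r\<^sup>2 - u\<^sup>2))) = hit_integral lam r 0"
proof -
  have "(LBINT u=0..r. 1 - exp (- 2 * lam * sqrt (r\<^sup>2 - u\<^sup>2)))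
      = integral {0..r} (\<lambda>u. 1 - exp (- 2 * lam * sqrt (r\<^sup>2 - u\<^sup>2)))"
    unfolding zero_ereal_def
    by (rule interval_integral_eq_integral[OF assms])
       (intro borel_integrable_atLeastAtMost' continuous_intros)
  also have "\<dots> = hit_integral lam r 0"
    unfolding hit_integral_def miss_prob_def
  proof (intro integral_cong)
    fix u assume "u \<in> {0..r}"
    then have "u\<^sup>2 \<le> r\<^sup>2" by (simp add: power_mono)
    then show "1 - exp (- 2 * lam * sqrt (r\<^sup>2 - u\<^sup>2))
        = 1 - exp (- 2 * lam * max 0 (sqrt (r\<^sup>2 - u\<^sup>2)))"
      by simp
  qed
  finally show ?thesis .
qed

lemma hit_integral_self[simp]: "hit_integral lam r r = 0"
  by (simp add: hit_integral_def)

text \<open>The fixed-point equation of clear_prob below, restricted to the gaps that end inside the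
  disc.\<close>
lemma has_integral_renewal_density:
  assumes "a \<le> r"
  shows "((\<lambda>y. mu * exp (- y * mu) * miss_prob lam r (a + y)
              * exp (- mu * hit_integral lam r (a + y)))
           has_integral exp (- mu * hit_integral lam r a) - exp (- (r - a) * mu)) {0..r - a}"
    (is "(?k has_integral _) _")
proof -
  define f where "f y = - (exp (- y * mu) * exp (- mu * hit_integral lam r (a + y)))" for y
  have "(?k has_integral f (r - a) - f 0) {0..r - a}"
  proof (rule fundamental_theorem_of_calculus_interior)
    have "continuous_on {0..r - a} (\<lambda>y. hit_integral lam r (a + y))"
      by (rule continuous_on_compose2[OF continuous_on_hit_integral])
         (auto intro!: continuous_intros)
    then show "continuous_on {0..r - a} f"
      unfolding f_def by (intro continuous_intros)
  next
    fix y assume y: "y \<in> {0<..<r - a}"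
    have dI: "((\<lambda>y. hit_integral lam r (a + y))
        has_real_derivative - (1 - miss_prob lam r (a + y)) * 1) (at y)"
      by (rule DERIV_chain2[OF hit_integral_has_derivative[where a=a]])
         (use y in \<open>auto intro!: derivative_eq_intros\<close>)
    have "(f has_real_derivative ?k y) (at y)"
      unfolding f_def by (rule derivative_eq_intros dI refl | simp)+ (simp add: algebra_simps)
    then show "(f has_vector_derivative ?k y) (at y)"
      by (simp add: has_real_derivative_iff_has_vector_derivative)
  qed (use assms in simp)
  then show ?thesis by (simp add: f_def algebra_simps)
qed

locale exponential_renewal =
  fixes mu lam r :: real
  assumes mu: "0 < mu" and lam: "0 < lam" and r: "0 \<le> r"
begin

abbreviation gap_law :: "real measure" where
  "gap_law \<equiv> density lborel (exponential_density mu)"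

abbreviation T :: "(real \<Rightarrow> ennreal) \<Rightarrow> real \<Rightarrow> ennreal" where
  "T \<equiv> renewal_op gap_law (\<lambda>s. ennreal (miss_prob lam r s))"

lemma prob_space_gap_law: "prob_space gap_law"
  using prob_space_exponential_density[OF mu] .

lemma AE_gap_law_nonneg: "AE y in gap_law. 0 \<le> y"
  by (subst AE_density) (auto simp: exponential_density_def)

lemma emeasure_gap_law_gt: "0 \<le> c \<Longrightarrow> emeasure gap_law {c<..} = ennreal (exp (- c * mu))"
  and emeasure_gap_law_le: "0 \<le> c \<Longrightarrow> emeasure gap_law {..c} = ennreal (1 - exp (- c * mu))"
proof -
  interpret G: prob_space gap_law by (rule prob_space_gap_law)
  have D: "distributed gap_law lborel (\<lambda>x. x) (exponential_density mu)"
    by (simp add: distributed_def distr_id2)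
  assume c: "0 \<le> c"
  have "{x \<in> space gap_law. c < x} = {c<..}" "{x \<in> space gap_law. x \<le> c} = {..c}"
    by auto
  then show "emeasure gap_law {c<..} = ennreal (exp (- c * mu))"
    "emeasure gap_law {..c} = ennreal (1 - exp (- c * mu))"
    using G.exponential_distributedD_gt[OF D c mu] G.exponential_distributedD_le[OF D c mu]
    by (simp_all add: G.emeasure_eq_measure)
qed

text \<open>For a renewal process started at a with gaps Exp mu, the probability that none of its lines
  hits the disc.\<close>
definition clear_prob :: "real \<Rightarrow> ennreal" where
  "clear_prob a = ennreal (if a \<in> {0..r} then exp (- mu * hit_integral lam r a) else 1)"

lemma measurable_clear_prob[measurable]: "clear_prob \<in> borel_measurable borel"
proof -
  have "(\<lambda>a. if a \<in> {0..r} then exp (- mu * hit_integral lam r a) else 1) \<in> borel_measurable borel"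
    by (rule borel_measurable_continuous_on_if)
       (auto intro!: continuous_intros continuous_on_compose2[OF continuous_on_hit_integral])
  then show ?thesis unfolding clear_prob_def by measurable
qed

lemma T_eq_inside_plus_tail:
  assumes [measurable]: "w \<in> borel_measurable borel" and "\<And>b. r < b \<Longrightarrow> w b = 1"
  shows "T w a = (\<integral>\<^sup>+y. ennreal (miss_prob lam r (a + y)) * w (a + y) * indicator {..r - a} y
                   \<partial>gap_law) + emeasure gap_law {r - a<..}"
proof -
  have "T w a = (\<integral>\<^sup>+y. ennreal (miss_prob lam r (a + y)) * w (a + y) * indicator {..r - a} y
                          + indicator {r - a<..} y \<partial>gap_law)"
    unfolding renewal_op_def using r
    by (intro nn_integral_cong) (auto simp: indicator_def miss_prob_eq_1 assms(2))
  also have "\<dots> = (\<integral>\<^sup>+y. ennreal (miss_prob lam r (a + y)) * w (a + y) * indicator {..r - a} y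
                     \<partial>gap_law) + emeasure gap_law {r - a<..}"
    by (subst nn_integral_add) auto
  finally show ?thesis .
qed

lemma T_clear_prob_beyond:
  assumes "r < a"
  shows "T clear_prob a = clear_prob a"
proof -
  have "AE y in gap_law. ennreal (miss_prob lam r (a + y)) * clear_prob (a + y) = 1"
    using AE_gap_law_nonneg
    by eventually_elim (use assms r in \<open>simp add: miss_prob_eq_1 clear_prob_def\<close>)
  then have "T clear_prob a = (\<integral>\<^sup>+y. 1 \<partial>gap_law)"
    unfolding renewal_op_def by (rule nn_integral_cong_AE)
  then show ?thesis
    using assms prob_space.emeasure_space_1[OF prob_space_gap_law] by (simp add: clear_prob_def)
qed

lemma T_clear_prob_inside:
  assumes "0 \<le> a" "a \<le> r"
  shows "T clear_prob a = clear_prob a"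
proof -
  define k where "k y = mu * exp (- y * mu) * miss_prob lam r (a + y)
                         * exp (- mu * hit_integral lam r (a + y))" for y
  have k_int:
    "(k has_integral (exp (- mu * hit_integral lam r a) - exp (- (r - a) * mu))) {0..r - a}"
    unfolding k_def by (rule has_integral_renewal_density[OF assms(2)])
  have k_nonneg: "0 \<le> k y" for y
    using mu by (simp add: k_def miss_prob_nonneg)
  have "(\<integral>\<^sup>+y. ennreal (miss_prob lam r (a + y)) * clear_prob (a + y) * indicator {..r - a} y
          \<partial>gap_law)
      = (\<integral>\<^sup>+y\<in>{0..r - a}. ennreal (k y) \<partial>lborel)"
    using assms mu
    by (subst nn_integral_density)
       (measurable, auto intro!: nn_integral_cong simp: exponential_density_def indicator_def
          clear_prob_def k_def ennreal_mult'' miss_prob_nonneg mult_ac)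
  also have "\<dots> = ennreal (exp (- mu * hit_integral lam r a) - exp (- (r - a) * mu))"
    by (rule nn_integral_has_integral_lebesgue'[OF k_nonneg k_int])
  finally have "T clear_prob a = ennreal (exp (- mu * hit_integral lam r a) - exp (- (r - a) * mu))
                                 + ennreal (exp (- (r - a) * mu))"
    using assms by (simp add: T_eq_inside_plus_tail clear_prob_def emeasure_gap_law_gt)
  also have "\<dots> = clear_prob a"
    using has_integral_nonneg[OF k_int] k_nonneg assms
    by (simp add: clear_prob_def ennreal_plus[symmetric] del: ennreal_plus)
  finally show ?thesis .
qed

lemma T_clear_prob: "0 \<le> a \<Longrightarrow> T clear_prob a = clear_prob a"
  using T_clear_prob_beyond T_clear_prob_inside by fastforce

lemma clear_prob_le_1: "clear_prob a \<le> 1"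
  using mu lam hit_integral_nonneg[of lam r a] by (simp add: clear_prob_def)

lemma T_atMost_indicator_le:
  assumes a: "0 \<le> a"
  shows "T (\<lambda>b. of_bool (b \<le> r)) a \<le> ennreal (1 - exp (- r * mu)) * of_bool (a \<le> r)"
proof (cases "r < a")
  case True
  have "AE y in gap_law. ennreal (miss_prob lam r (a + y)) * of_bool (a + y \<le> r) = 0"
    using AE_gap_law_nonneg by eventually_elim (use True in simp)
  then have "T (\<lambda>b. of_bool (b \<le> r)) a = (\<integral>\<^sup>+y. 0 \<partial>gap_law)"
    unfolding renewal_op_def by (rule nn_integral_cong_AE)
  then show ?thesis by simp
next
  case False
  have "T (\<lambda>b. of_bool (b \<le> r)) a \<le> (\<integral>\<^sup>+y. indicator {..r - a} y \<partial>gap_law)"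
    unfolding renewal_op_def
    by (intro nn_integral_mono) (auto simp: indicator_def miss_prob_le_1 lam less_imp_le)
  also have "\<dots> = ennreal (1 - exp (- (r - a) * mu))"
    using False by (simp add: emeasure_gap_law_le)
  also have "\<dots> \<le> ennreal (1 - exp (- r * mu))"
    using a mu by (intro ennreal_leI) (simp add: algebra_simps)
  finally show ?thesis using False by simp
qed

lemma funpow_T_atMost_indicator_le:
  "0 \<le> a \<Longrightarrow> (T ^^ n) (\<lambda>b. of_bool (b \<le> r)) a \<le> ennreal (1 - exp (- r * mu)) ^ n * of_bool (a \<le> r)"
proof (induction n arbitrary: a)
  case (Suc n)
  let ?q = "ennreal (1 - exp (- r * mu))"
  have "(T ^^ Suc n) (\<lambda>b. of_bool (b \<le> r)) a \<le> T (\<lambda>b. ?q ^ n * of_bool (b \<le> r)) a"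
    using Suc by (simp add: renewal_op_mono[OF AE_gap_law_nonneg])
  also have "\<dots> = ?q ^ n * T (\<lambda>b. of_bool (b \<le> r)) a"
    by (rule renewal_op_cmult) simp_all
  also have "\<dots> \<le> ?q ^ n * (?q * of_bool (a \<le> r))"
    by (intro mult_left_mono T_atMost_indicator_le Suc.prems) simp
  finally show ?case by (simp add: mult_ac)
qed simp

lemma funpow_T_one_bounds:
  "clear_prob 0 \<le> (T ^^ n) (\<lambda>_. 1) 0"
  "(T ^^ n) (\<lambda>_. 1) 0 \<le> clear_prob 0 + ennreal (1 - exp (- r * mu)) ^ n"
proof -
  have "clear_prob 0 = (T ^^ n) clear_prob 0"
    by (rule funpow_renewal_op_fixed[OF AE_gap_law_nonneg T_clear_prob, symmetric]) simp_all
  also have "\<dots> \<le> (T ^^ n) (\<lambda>_. 1) 0"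
    by (intro funpow_renewal_op_mono[OF AE_gap_law_nonneg] clear_prob_le_1)
  finally show "clear_prob 0 \<le> (T ^^ n) (\<lambda>_. 1) 0" .
  have "(T ^^ n) (\<lambda>_. 1) 0 \<le> (T ^^ n) (\<lambda>b. clear_prob b + of_bool (b \<le> r)) 0"
    by (intro funpow_renewal_op_mono[OF AE_gap_law_nonneg]) (auto simp: clear_prob_def)
  also have "\<dots> = (T ^^ n) clear_prob 0 + (T ^^ n) (\<lambda>b. of_bool (b \<le> r)) 0"
    by (rule funpow_renewal_op_add[OF prob_space_gap_law]) simp_all
  also have "\<dots> \<le> clear_prob 0 + ennreal (1 - exp (- r * mu)) ^ n"
    using funpow_T_atMost_indicator_le[of 0 n] r
    by (intro add_mono) (simp_all add: funpow_renewal_op_fixed[OF AE_gap_law_nonneg T_clear_prob])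
  finally show "(T ^^ n) (\<lambda>_. 1) 0 \<le> clear_prob 0 + ennreal (1 - exp (- r * mu)) ^ n" .
qed

lemma funpow_T_one_tendsto:
  "(\<lambda>n. (T ^^ n) (\<lambda>_. 1) 0) \<longlonglongrightarrow> ennreal (exp (- mu * hit_integral lam r 0))"
proof -
  have "(\<lambda>n. ennreal ((1 - exp (- r * mu)) ^ n)) \<longlonglongrightarrow> ennreal 0"
    using mu r by (intro tendsto_ennrealI LIMSEQ_power_zero) auto
  then have "(\<lambda>n. clear_prob 0 + ennreal (1 - exp (- r * mu)) ^ n) \<longlonglongrightarrow> clear_prob 0 + 0"
    using mu r by (intro tendsto_add tendsto_const) (simp add: ennreal_power)
  then have upper: "(\<lambda>n. clear_prob 0 + ennreal (1 - exp (- r * mu)) ^ n) \<longlonglongrightarrow> clear_prob 0"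
    by simp
  have "(\<lambda>n. (T ^^ n) (\<lambda>_. 1) 0) \<longlonglongrightarrow> clear_prob 0"
    by (rule tendsto_sandwich[OF _ _ tendsto_const upper];
        intro always_eventually allI funpow_T_one_bounds)
  then show ?thesis using r by (simp add: clear_prob_def)
qed

end

section \<open>The typical vehicle\<close>

locale typical_vehicle = indep_family M X for M :: "'a measure" and X :: "rv_index \<Rightarrow> 'a \<Rightarrow> real" +
  fixes mu lam r :: real
  assumes mu: "0 < mu" and lam: "0 < lam" and r: "0 \<le> r"
    and line_gap: "\<And>i. distributed M lborel (X (LineGap i)) (exponential_density mu)"
    and vehicle_gap: "\<And>i l. distributed M lborel (X (VehGap i l)) (exponential_density lam)"
    and typical_gap: "\<And>j l. distributed M lborel (X (TypVehGap j l)) (exponential_density lam)"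
begin

sublocale exponential_renewal mu lam r
  using mu lam r by unfold_locales

lemma distr_line_gap: "distr M borel (X (LineGap i)) = gap_law"
proof -
  have "distr M borel (X (LineGap i)) = distr M lborel (X (LineGap i))"
    by (rule distr_cong) auto
  then show ?thesis using line_gap[of i] by (simp add: distributed_def)
qed

definition origin_lines_clear :: "nat \<Rightarrow> (rv_index \<Rightarrow> real) \<Rightarrow> bool" where
  "origin_lines_clear p x \<longleftrightarrow> (\<forall>j<p. r < min (x (TypVehGap j 0)) (x (TypVehGap j (-1))))"

definition stationary_lines_clear :: "(nat \<Rightarrow> int) \<Rightarrow> nat \<Rightarrow> (rv_index \<Rightarrow> real) \<Rightarrow> bool" where
  "stationary_lines_clear line N x \<longleftrightarrow> (\<forall>n<N. sqrt (r\<^sup>2 - (\<Sum>i\<le>n. x (LineGap (line i)))\<^sup>2)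
                                   < min (x (VehGap (line n) 0)) (x (VehGap (line n) (-1))))"

lemma measurable_origin_lines_clear[measurable]:
  "Measurable.pred product_borel (origin_lines_clear p)"
  unfolding origin_lines_clear_def by measurable

lemma measurable_stationary_lines_clear[measurable]:
  "Measurable.pred product_borel (stationary_lines_clear line N)"
  unfolding stationary_lines_clear_def by measurable

lemma nn_integral_origin_lines_clear:
  "(\<integral>\<^sup>+\<omega>. of_bool (origin_lines_clear p (sample \<omega>)) \<partial>M) = ennreal (exp (- 2 * lam * r)) ^ p"
proof -
  have "(\<integral>\<^sup>+\<omega>. 1 * of_bool (\<forall>j<p. r < min (sample \<omega> (TypVehGap j 0)) (sample \<omega> (TypVehGap j (-1))))
          \<partial>M)
      = (\<integral>\<^sup>+\<omega>. 1 * (\<Prod>j<p. ennreal (exp (- 2 * lam * max 0 r))) \<partial>M)"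
    by (rule nn_integral_exponential_thresholds[where c="\<lambda>_ _. r"])
       (auto simp: inj_def ignores_def typical_gap lam)
  then show ?thesis
    using r by (simp add: origin_lines_clear_def emeasure_space_1)
qed

lemma nn_integral_stationary_lines_clear:
  assumes "inj line" and [measurable]: "Z \<in> borel_measurable product_borel"
    and Z: "ignores (range (\<lambda>n. LineGap (line n)) \<union> range (\<lambda>n. VehGap (line n) 0)
                     \<union> range (\<lambda>n. VehGap (line n) (-1))) Z"
  shows "(\<integral>\<^sup>+\<omega>. Z (sample \<omega>) * of_bool (stationary_lines_clear line N (sample \<omega>)) \<partial>M)
       = (\<integral>\<^sup>+\<omega>. Z (sample \<omega>) \<partial>M) * (T ^^ N) (\<lambda>_. 1) 0"
proof -
  let ?s = "\<lambda>n x. \<Sum>i\<le>n. x (LineGap (line i))"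
  have "(\<integral>\<^sup>+\<omega>. Z (sample \<omega>) * of_bool (stationary_lines_clear line N (sample \<omega>)) \<partial>M)
      = (\<integral>\<^sup>+\<omega>. Z (sample \<omega>)
           * (\<Prod>n<N. ennreal (exp (- 2 * lam * max 0 (sqrt (r\<^sup>2 - (?s n (sample \<omega>))\<^sup>2))))) \<partial>M)"
    unfolding stationary_lines_clear_def using assms(1) Z
    by (intro nn_integral_exponential_thresholds[where c="\<lambda>n x. sqrt (r\<^sup>2 - (?s n x)\<^sup>2)"])
       (auto simp: inj_def ignores_def vehicle_gap lam)
  also have "\<dots> = (\<integral>\<^sup>+\<omega>. Z (sample \<omega>) * (\<Prod>n<N. ennreal (miss_prob lam r (?s n (sample \<omega>)))) * 1 \<partial>M)"
    by (simp add: miss_prob_def)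
  also have "\<dots> = (\<integral>\<^sup>+\<omega>. Z (sample \<omega>) \<partial>M) * (T ^^ N) (\<lambda>_. 1) 0"
    using assms(1) Z
    by (intro nn_integral_renewal[where w="\<lambda>_. 1"]) (auto simp: inj_def ignores_def distr_line_gap)
  finally show ?thesis .
qed

text \<open>Enumerates the stationary lines on the negative side of o outwards, as int does on the
  positive side.\<close>
abbreviation neg_index :: "nat \<Rightarrow> int" where
  "neg_index n \<equiv> -1 - int n"

definition disc_clear :: "nat \<Rightarrow> nat \<Rightarrow> (rv_index \<Rightarrow> real) \<Rightarrow> bool" where
  "disc_clear p N x \<longleftrightarrow>
     origin_lines_clear p x \<and> stationary_lines_clear neg_index N x \<and> stationary_lines_clear int N x"

lemma measurable_disc_clear[measurable]: "Measurable.pred product_borel (disc_clear p N)"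
  unfolding disc_clear_def by measurable

lemma emeasure_disc_clear:
  "emeasure M {\<omega> \<in> space M. disc_clear p N (sample \<omega>)}
     = ennreal (exp (- 2 * lam * r)) ^ p * (T ^^ N) (\<lambda>_. 1) 0 * (T ^^ N) (\<lambda>_. 1) 0"
proof -
  let ?O = "\<lambda>\<omega>. of_bool (origin_lines_clear p (sample \<omega>)) :: ennreal"
  let ?neg = "\<lambda>\<omega>. of_bool (stationary_lines_clear neg_index N (sample \<omega>)) :: ennreal"
  let ?pos = "\<lambda>\<omega>. of_bool (stationary_lines_clear int N (sample \<omega>)) :: ennreal"
  have "{\<omega> \<in> space M. disc_clear p N (sample \<omega>)} \<in> sets M"
    by measurable
  then have "emeasure M {\<omega> \<in> space M. disc_clear p N (sample \<omega>)}
      = (\<integral>\<^sup>+\<omega>. indicator {\<omega> \<in> space M. disc_clear p N (sample \<omega>)} \<omega> \<partial>M)"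
    by simp
  also have "\<dots> = (\<integral>\<^sup>+\<omega>. (?O \<omega> * ?neg \<omega>) * ?pos \<omega> \<partial>M)"
    by (intro nn_integral_cong) (auto simp: disc_clear_def split: split_indicator)
  also have "\<dots> = (\<integral>\<^sup>+\<omega>. ?O \<omega> * ?neg \<omega> \<partial>M) * (T ^^ N) (\<lambda>_. 1) 0"
    by (rule nn_integral_stationary_lines_clear)
       (auto simp: ignores_def origin_lines_clear_def stationary_lines_clear_def)
  also have "(\<integral>\<^sup>+\<omega>. ?O \<omega> * ?neg \<omega> \<partial>M) = (\<integral>\<^sup>+\<omega>. ?O \<omega> \<partial>M) * (T ^^ N) (\<lambda>_. 1) 0"
    by (rule nn_integral_stationary_lines_clear)
       (auto simp: inj_def ignores_def origin_lines_clear_def)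
  finally show ?thesis
    by (simp add: nn_integral_origin_lines_clear)
qed

lemma prob_disc_clear_forever:
  "prob {\<omega> \<in> space M. \<forall>N. disc_clear p N (sample \<omega>)}
     = exp (- 2 * lam * r) ^ p * exp (- mu * hit_integral lam r 0) ^ 2"
proof -
  let ?C = "\<lambda>N. {\<omega> \<in> space M. disc_clear p N (sample \<omega>)}"
  let ?L = "ennreal (exp (- 2 * lam * r)) ^ p * ennreal (exp (- mu * hit_integral lam r 0))
              * ennreal (exp (- mu * hit_integral lam r 0))"
  have "(\<lambda>N. emeasure M (?C N)) \<longlonglongrightarrow> emeasure M (\<Inter>N. ?C N)"
    by (rule Lim_emeasure_decseq)
       (auto intro!: decseq_SucI simp: disc_clear_def stationary_lines_clear_def less_Suc_eq)
  moreover have "(\<Inter>N. ?C N) = {\<omega> \<in> space M. \<forall>N. disc_clear p N (sample \<omega>)}"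
    by auto
  ultimately have
    "(\<lambda>N. emeasure M (?C N)) \<longlonglongrightarrow> emeasure M {\<omega> \<in> space M. \<forall>N. disc_clear p N (sample \<omega>)}"
    by simp
  moreover have "(\<lambda>N. emeasure M (?C N)) \<longlonglongrightarrow> ?L"
    unfolding emeasure_disc_clear by (intro tendsto_intros funpow_T_one_tendsto) auto
  ultimately have "emeasure M {\<omega> \<in> space M. \<forall>N. disc_clear p N (sample \<omega>)} = ?L"
    by (rule LIMSEQ_unique)
  then show ?thesis
    by (simp add: measure_def enn2real_mult power2_eq_square ennreal_power[symmetric]
        del: ennreal_power)
qed

lemma all_stationary_lines_clear_iff:
  "(\<forall>N. stationary_lines_clear line N x) \<longleftrightarrow> (\<forall>n. sqrt (r\<^sup>2 - (\<Sum>i\<le>n. x (LineGap (line i)))\<^sup>2)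
                                       < min (x (VehGap (line n) 0)) (x (VehGap (line n) (-1))))"
  unfolding stationary_lines_clear_def by (meson lessI)

lemma vehicle_near_iff_not_disc_clear:
  assumes "\<And>i l. 0 \<le> X (VehGap i l) \<omega>" and "\<And>j l. 0 \<le> X (TypVehGap j l) \<omega>"
  shows "(\<exists>v \<in> other_vehicles m \<psi> (\<lambda>i. X (LineGap i) \<omega>) \<Phi> (\<lambda>i l. X (VehGap i l) \<omega>)
                                  (\<lambda>j l. X (TypVehGap j l) \<omega>). norm v \<le> r)
         \<longleftrightarrow> \<not> (\<forall>N. disc_clear (m div 2) N (sample \<omega>))"
proof -
  let ?G = "\<lambda>i. X (LineGap i) \<omega>"
  let ?misses = "\<lambda>i. sqrt (r\<^sup>2 - (ppp_point ?G i)\<^sup>2) < min (X (VehGap i 0) \<omega>) (X (VehGap i (-1)) \<omega>)"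
  have "(\<forall>N. stationary_lines_clear int N (sample \<omega>)) \<longleftrightarrow> (\<forall>n. ?misses (int n))"
    unfolding all_stationary_lines_clear_iff by (simp add: sample_apply ppp_point_nat)
  moreover have "(\<forall>N. stationary_lines_clear neg_index N (sample \<omega>)) \<longleftrightarrow> (\<forall>n. ?misses (-1 - int n))"
    unfolding all_stationary_lines_clear_iff by (simp add: sample_apply ppp_point_neg)
  ultimately have disc_clear_iff: "(\<forall>N. disc_clear (m div 2) N (sample \<omega>))
      \<longleftrightarrow> origin_lines_clear (m div 2) (sample \<omega>) \<and> (\<forall>i. ?misses i)"
    unfolding disc_clear_def all_int_iff_nat by blast
  have typical_iff: "\<not> origin_lines_clear (m div 2) (sample \<omega>)
      \<longleftrightarrow> (\<exists>j < m div 2. min (X (TypVehGap j 0) \<omega>) (X (TypVehGap j (-1)) \<omega>) \<le> r)"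
    by (auto simp: origin_lines_clear_def sample_apply not_less)
  show ?thesis
    unfolding other_vehicles_near_iff[OF r assms] typical_iff[symmetric] disc_clear_iff
    by (simp add: not_less min_le_iff_disj)
qed

lemma prob_vehicle_near:
  "prob {\<omega> \<in> space M. \<exists>v \<in> other_vehicles m \<psi> (\<lambda>i. X (LineGap i) \<omega>) (\<Phi> \<omega>) (\<lambda>i l. X (VehGap i l) \<omega>)
                                              (\<lambda>j l. X (TypVehGap j l) \<omega>). norm v \<le> r}
     = 1 - exp (- 2 * lam * r) ^ (m div 2) * exp (- mu * hit_integral lam r 0) ^ 2"
proof -
  let ?near = "\<lambda>\<omega>. \<exists>v \<in> other_vehicles m \<psi> (\<lambda>i. X (LineGap i) \<omega>) (\<Phi> \<omega>) (\<lambda>i l. X (VehGap i l) \<omega>)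
                                            (\<lambda>j l. X (TypVehGap j l) \<omega>). norm v \<le> r"
  let ?clear = "{\<omega> \<in> space M. \<forall>N. disc_clear (m div 2) N (sample \<omega>)}"
  have "{\<omega> \<in> space M. ?near \<omega>} \<in> sets M"
    unfolding other_vehicles_near_iff_ppp_point[OF r] by measurable
  moreover have "AE \<omega> in M. ?near \<omega> \<longleftrightarrow> \<omega> \<notin> ?clear"
  proof -
    have "AE \<omega> in M. (\<forall>i l. 0 < X (VehGap i l) \<omega>) \<and> (\<forall>j l. 0 < X (TypVehGap j l) \<omega>)"
      unfolding AE_conj_iff AE_all_countable
      by (auto intro: AE_exponential_pos[OF vehicle_gap lam] AE_exponential_pos[OF typical_gap lam])
    with AE_space show ?thesis
      by eventually_elim (auto simp: vehicle_near_iff_not_disc_clear less_imp_le)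
  qed
  ultimately have "prob {\<omega> \<in> space M. ?near \<omega>} = prob (space M - ?clear)"
    by (intro measure_eq_AE) auto
  also have "\<dots> = 1 - prob ?clear"
    by (rule prob_compl) measurable
  finally show ?thesis
    by (simp add: prob_disc_clear_forever)
qed

end

theorem lemma6:
  fixes M :: "'a measure" and s :: street_model and m :: nat
    and mu lam r :: real and psi :: "nat \<Rightarrow> real"
    and G :: "int \<Rightarrow> 'a \<Rightarrow> real" and Phi :: "int \<Rightarrow> 'a \<Rightarrow> real"
    and V :: "int \<Rightarrow> int \<Rightarrow> 'a \<Rightarrow> real" and W :: "nat \<Rightarrow> int \<Rightarrow> 'a \<Rightarrow> real"
  assumes "prob_space M"
    and "mu > 0" and "lam > 0" and "r \<ge> 0"
    and "m = 2 \<or> m = 4"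
    and "\<And>j. j < m div 2 \<Longrightarrow> psi j \<in> {0..<pi}"
    and "s = OG \<Longrightarrow> (\<And>j. j < m div 2 \<Longrightarrow> psi j \<in> {0, pi/2})"
    and "m = 4 \<Longrightarrow> psi 0 \<noteq> psi 1"
    and "prob_space.indep_vars M (\<lambda>_. borel)
           (\<lambda>k. case k of LineGap i \<Rightarrow> G i | LineOrient i \<Rightarrow> Phi i
                        | VehGap i l \<Rightarrow> V i l | TypVehGap j l \<Rightarrow> W j l) UNIV"
    and "\<And>i. distributed M lborel (G i) (exponential_density mu)"
    and "\<And>i. distr M borel (Phi i) = orient_law s"
    and "\<And>i l. distributed M lborel (V i l) (exponential_density lam)"
    and "\<And>j l. distributed M lborel (W j l) (exponential_density lam)"
  shows "measure M {\<omega> \<in> space M. \<exists>v \<in> other_vehicles m psi (\<lambda>i. G i \<omega>) (\<lambda>i. Phi i \<omega>)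
                           (\<lambda>i l. V i l \<omega>) (\<lambda>j l. W j l \<omega>). norm v \<le> r}
         = 1 - exp (- (real m * lam * r)
                    - 2 * mu * (LBINT u=0..r. 1 - exp (- 2 * lam * sqrt (r\<^sup>2 - u\<^sup>2))))"
proof -
  define X where "X = (\<lambda>k. case k of LineGap i \<Rightarrow> G i | LineOrient i \<Rightarrow> Phi i
                                   | VehGap i l \<Rightarrow> V i l | TypVehGap j l \<Rightarrow> W j l)"
  interpret prob_space M by (rule assms(1))
  interpret typical_vehicle M X mu lam r
    using assms(2-4,9,10,12,13) by unfold_locales (simp_all add: X_def)
  have "measure M {\<omega> \<in> space M. \<exists>v \<in> other_vehicles m psi (\<lambda>i. G i \<omega>) (\<lambda>i. Phi i \<omega>)
                           (\<lambda>i l. V i l \<omega>) (\<lambda>j l. W j l \<omega>). norm v \<le> r}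
      = 1 - exp (- 2 * lam * r) ^ (m div 2) * exp (- mu * hit_integral lam r 0) ^ 2"
    using prob_vehicle_near[of m psi "\<lambda>\<omega> i. Phi i \<omega>"] by (simp add: X_def)
  also have "exp (- 2 * lam * r) ^ (m div 2) * exp (- mu * hit_integral lam r 0) ^ 2
      = exp (- (real m * lam * r) - 2 * mu * hit_integral lam r 0)"
    using assms(5) by (auto simp: exp_add[symmetric] exp_of_nat_mult[symmetric] algebra_simps)
  finally show ?thesis
    unfolding interval_integral_eq_hit_integral[OF assms(4)] .
qed

end
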